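(* Assume $\mathcal G$ is strongly connected. Then there exists a constant $c\in(0,1)$ such that if for each agent $i$ the triggering times are generated recursively along the solution of system (S) by $t^i_1=0$ and either $$t^i_{k+1}=\max\Big\{\tau\ge t^i_k:\ |q_i(t^i_k)-q_i(t)|\le c\,|q_i(t)|\ \ \forall t\in[t^i_k,\tau]\Big\}$$ or $$t^i_{k+1}=\max\Big\{\tau\ge t^i_k:\ \frac{|q_i(t^i_k)|}{1+c}\le|q_i(t)|\le\frac{|q_i(t^i_k)|}{1-c}\ \ \forall t\in[t^i_k,\tau]\Big\},$$ then system (S) reaches consensus.
   Context: Let $\mathcal G$ be a weighted directed graph on agents $v_1,\dots,v_m$ with weighted adjacency matrix $\mathcal A=(a_{ij})$, $a_{ij}\ge0$, $a_{ii}=0$, where $a_{ij}>0$ iff there is a link from $v_j$ to $v_i$. Let $D=\mathrm{diag}(\sum_j a_{1j},\dots,\sum_j a_{mj})$ and $L=D-\mathcal A$. $\mathcal G$ is strongly connected if there is a directed path between any two distinct agents. System (S): $\dot x_i(t)=-\sum_{j=1}^m L_{ij}x_j(t^i_{k_i(t)})$, $i=1,\dots,m$, where $0=t^i_1<t^i_2<\cdots$ are agent $i$'s triggering times and $k_i(t)=\max\{k:t^i_k\le t\}$. Define $q_i(t)=-\sum_jL_{ij}x_j(t)$. Consensus means $x_i(t)-x_j(t)\to0$ as $t\to\infty$ for all $i,j$. *)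

theory Defs
  imports Complex_Main
begin

text \<open>Agents are the elements of a finite type 'n. The weighted adjacency matrix is
  a :: 'n \<Rightarrow> 'n \<Rightarrow> real, with a i j > 0 iff there is a link from agent j to agent i.\<close>

definition weighted_adjacency :: "('n::finite \<Rightarrow> 'n \<Rightarrow> real) \<Rightarrow> bool" where
  "weighted_adjacency a \<longleftrightarrow> (\<forall>i j. a i j \<ge> 0) \<and> (\<forall>i. a i i = 0)"

definition laplacian :: "('n::finite \<Rightarrow> 'n \<Rightarrow> real) \<Rightarrow> 'n \<Rightarrow> 'n \<Rightarrow> real" where
  "laplacian a i j = (if i = j then (\<Sum>k\<in>UNIV. a i k) else 0) - a i j"

definition graph_edges :: "('n \<Rightarrow> 'n \<Rightarrow> real) \<Rightarrow> ('n \<times> 'n) set" where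
  "graph_edges a = {(j, i). a i j > 0}"

definition strongly_connected :: "('n \<Rightarrow> 'n \<Rightarrow> real) \<Rightarrow> bool" where
  "strongly_connected a \<longleftrightarrow> (\<forall>i j. i \<noteq> j \<longrightarrow> (i, j) \<in> (graph_edges a)\<^sup>+)"

definition qfun :: "('n::finite \<Rightarrow> 'n \<Rightarrow> real) \<Rightarrow> (real \<Rightarrow> 'n \<Rightarrow> real) \<Rightarrow> 'n \<Rightarrow> real \<Rightarrow> real" where
  "qfun a x i t = - (\<Sum>j\<in>UNIV. laplacian a i j * x t j)"

text \<open>The set of triggering times of one agent: contains t_1 = 0, lies in [0,\<infinity>),
  and has only finitely many elements below any bound (so that k_i(t) is defined for
  every t \<ge> 0; the sequence may be finite or infinite).\<close>
definition admissible_triggers :: "real set \<Rightarrow> bool" where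
  "admissible_triggers T \<longleftrightarrow> 0 \<in> T \<and> T \<subseteq> {0..} \<and> (\<forall>b. finite (T \<inter> {..b}))"

definition last_trigger :: "real set \<Rightarrow> real \<Rightarrow> real" where
  "last_trigger T t = Max {s \<in> T. s \<le> t}"

definition solves_S ::
  "('n::finite \<Rightarrow> 'n \<Rightarrow> real) \<Rightarrow> ('n \<Rightarrow> real set) \<Rightarrow> (real \<Rightarrow> 'n \<Rightarrow> real) \<Rightarrow> bool" where
  "solves_S a T x \<longleftrightarrow>
     (\<forall>i. continuous_on {0..} (\<lambda>t. x t i) \<and>
          (\<forall>t>0. t \<notin> T i \<longrightarrow>
             ((\<lambda>s. x s i) has_real_derivative
                (- (\<Sum>j\<in>UNIV. laplacian a i j * x (last_trigger (T i) t) j))) (at t)))"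

text \<open>The triggering set T is generated recursively by the rule P (P s t: the condition
  at time t relative to the last trigger s): for each trigger s, with
  S = {\<tau> \<ge> s. P s t for all t \<in> [s,\<tau>]}, the next trigger (if any) is the maximum of S,
  and if there is no next trigger, S is unbounded (max S = \<infinity>).\<close>
definition generated_by :: "real set \<Rightarrow> (real \<Rightarrow> real \<Rightarrow> bool) \<Rightarrow> bool" where
  "generated_by T P \<longleftrightarrow>
     (\<forall>s\<in>T. let S = {\<tau>. s \<le> \<tau> \<and> (\<forall>t\<in>{s..\<tau>}. P s t)} in
        (\<exists>n\<in>T. s < n \<and> T \<inter> {s<..<n} = {} \<and> n \<in> S \<and> (\<forall>\<tau>\<in>S. \<tau> \<le> n))
        \<or> ((\<forall>n\<in>T. n \<le> s) \<and> (\<forall>\<tau>\<ge>s. \<tau> \<in> S)))"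

definition rule1 :: "real \<Rightarrow> (real \<Rightarrow> real) \<Rightarrow> real \<Rightarrow> real \<Rightarrow> bool" where
  "rule1 c qi s t \<longleftrightarrow> \<bar>qi s - qi t\<bar> \<le> c * \<bar>qi t\<bar>"

definition rule2 :: "real \<Rightarrow> (real \<Rightarrow> real) \<Rightarrow> real \<Rightarrow> real \<Rightarrow> bool" where
  "rule2 c qi s t \<longleftrightarrow> \<bar>qi s\<bar> / (1 + c) \<le> \<bar>qi t\<bar> \<and> \<bar>qi t\<bar> \<le> \<bar>qi s\<bar> / (1 - c)"

definition consensus :: "(real \<Rightarrow> 'n \<Rightarrow> real) \<Rightarrow> bool" where
  "consensus x \<longleftrightarrow> (\<forall>i j. ((\<lambda>t. x t i - x t j) \<longlongrightarrow> 0) at_top)"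

end

theory Submission
  imports Defs "HOL-Analysis.Analysis"
begin

(* The only property of the triggering rules that matters is that between two events the
   frozen control value q_i(t_k) lies "in the sector" of the current value q_i(t): it has the
   same sign and lies between q_i(t)/2 and 3 q_i(t)/2.  For rule 1 this is immediate, for
   rule 2 it follows from the intermediate value theorem.  We therefore study the abstract
   locale sector_dynamics, in which dx_i/dt lies in the sector of q_i off a locally finite
   set, and prove consensus for it:
   - maximum and minimum principles: max_i x_i never increases, min_i x_i never decreases;
   - a Gronwall comparison shows that a deficit below the maximum spreads along directed
     edges, so by strong connectivity every agent is strictly below the old maximum after a
     time N, and the spread max - min contracts by a fixed factor on each window of length N;
   - geometric decay of the spread gives consensus. *)

lemma nondecreasing_if_nonneg_derivative:
  fixes f :: "real \<Rightarrow> real"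
  assumes ab: "a \<le> b" and S: "finite S" and cf: "continuous_on {a..b} f"
    and d: "\<And>x. x \<in> {a<..<b} - S \<Longrightarrow> \<exists>y. (f has_real_derivative y) (at x) \<and> 0 \<le> y"
  shows "f a \<le> f b"
proof -
  define g where "g x = (if x \<in> {a<..<b} - S then (SOME y. (f has_real_derivative y) (at x) \<and> 0 \<le> y) else 0)" for x
  have g: "(f has_real_derivative g x) (at x) \<and> 0 \<le> g x" if "x \<in> {a<..<b} - S" for x
    using someI_ex[OF d[OF that]] that by (simp add: g_def)
  have g0: "0 \<le> g x" for x
    using g[of x] by (auto simp: g_def)
  have "(g has_integral (f b - f a)) {a..b}"
    by (rule fundamental_theorem_of_calculus_interior_strong[OF S ab _ cf])
      (use g in \<open>simp add: has_real_derivative_iff_has_vector_derivative\<close>)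
  then have "0 \<le> f b - f a" by (rule has_integral_nonneg) (use g0 in auto)
  then show ?thesis by simp
qed

lemma gronwall_affine_lower:
  fixes y :: "real \<Rightarrow> real"
  assumes tt: "t1 \<le> t" and S: "finite S" and cy: "continuous_on {t1..t} y" and K: "0 \<le> K" and g: "0 \<le> g"
    and d: "\<And>u. u \<in> {t1<..<t} - S \<Longrightarrow> \<exists>D. (y has_real_derivative D) (at u) \<and> g - K * y u \<le> D"
  shows "exp (- K * (t - t1)) * (y t1 + g * (t - t1)) \<le> y t"
proof -
  define h where "h u = exp (K * (u - t1)) * y u - g * (u - t1)" for u
  have "h t1 \<le> h t"
  proof (rule nondecreasing_if_nonneg_derivative[OF tt S])
    show "continuous_on {t1..t} h" unfolding h_def by (intro continuous_intros cy)
  next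
    fix u assume u: "u \<in> {t1<..<t} - S"
    obtain D where D: "(y has_real_derivative D) (at u)" "g - K * y u \<le> D" using d[OF u] by blast
    define e where "e = exp (K * (u - t1))"
    have hd: "(h has_real_derivative e * (K * y u + D) - g) (at u)"
      unfolding h_def e_def using D(1) by (auto intro!: derivative_eq_intros simp: algebra_simps)
    have "1 \<le> e" unfolding e_def using u K by simp
    then have "g \<le> e * g" using g by (simp add: mult_right_mono[of 1 e g, simplified])
    also have "\<dots> \<le> e * (K * y u + D)" using D(2) \<open>1 \<le> e\<close> by (intro mult_left_mono) auto
    finally show "\<exists>y. (h has_real_derivative y) (at u) \<and> 0 \<le> y" using hd by auto
  qed
  then have "y t1 + g * (t - t1) \<le> exp (K * (t - t1)) * y t" unfolding h_def by simp
  then have "exp (- K * (t - t1)) * (y t1 + g * (t - t1)) \<le> exp (- K * (t - t1)) * (exp (K * (t - t1)) * y t)"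
    by (intro mult_left_mono) auto
  also have "\<dots> = y t" by (simp add: mult.assoc[symmetric] exp_add[symmetric])
  finally show ?thesis .
qed

lemma first_crossing_time:
  fixes w :: "'i::finite \<Rightarrow> real \<Rightarrow> real"
  assumes t01: "t0 \<le> t1" and cw: "\<And>i. continuous_on {t0..t1} (w i)"
    and start: "\<And>i. w i t0 < 0" and cross: "0 \<le> w i1 t1"
  obtains \<tau> k where "t0 < \<tau>" "\<tau> \<le> t1" "0 \<le> w k \<tau>" "\<And>j u. t0 \<le> u \<Longrightarrow> u < \<tau> \<Longrightarrow> w j u < 0"
proof -
  define Z where "Z = (\<Union>i. {t0..t1} \<inter> w i -` {0..})"
  have clZ: "closed Z" unfolding Z_def
    by (intro closed_UN finite_UNIV ballI continuous_closed_preimage cw closed_atLeastAtMost closed_atLeast) simp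
  have t1Z: "t1 \<in> Z" unfolding Z_def using t01 cross by auto
  have bdd: "bdd_below Z" unfolding Z_def by (rule bdd_belowI[of _ t0]) auto
  define \<tau> where "\<tau> = Inf Z"
  have "\<tau> \<in> Z" unfolding \<tau>_def using closed_contains_Inf[OF _ bdd clZ] t1Z by blast
  then obtain k where k: "0 \<le> w k \<tau>" "t0 \<le> \<tau>" "\<tau> \<le> t1" unfolding Z_def by auto
  have below: "w j u < 0" if "t0 \<le> u" "u < \<tau>" for j u
  proof (rule ccontr)
    assume "\<not> w j u < 0"
    then have "u \<in> Z" unfolding Z_def using that k by (auto intro!: exI[of _ j])
    then have "\<tau> \<le> u" unfolding \<tau>_def by (rule cInf_lower[OF _ bdd])
    then show False using that by simp
  qed
  have "t0 \<noteq> \<tau>" using start[of k] k by auto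
  then show ?thesis using that[of \<tau> k] k below by simp
qed

lemma antitone_tendsto_zero_along_grid:
  fixes f :: "real \<Rightarrow> real"
  assumes anti: "\<And>s t. 0 \<le> s \<Longrightarrow> s \<le> t \<Longrightarrow> f t \<le> f s" and nonneg: "\<And>t. 0 \<le> f t"
    and h: "0 < h" and grid: "(\<lambda>n. f (real n * h)) \<longlonglongrightarrow> 0"
  shows "(f \<longlongrightarrow> 0) at_top"
proof (rule tendstoI)
  fix e :: real assume "0 < e"
  then obtain n where n: "f (real n * h) < e"
    using grid[THEN tendstoD, of e] nonneg by (auto simp: eventually_sequentially dist_real_def)
  have "dist (f t) 0 < e" if "real n * h \<le> t" for t
    using anti[OF _ that] n nonneg[of t] h by (simp add: dist_real_def)
  then show "\<forall>\<^sub>F t in at_top. dist (f t) 0 < e"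
    unfolding eventually_at_top_linorder by blast
qed

(* "D lies between w/2 and 3w/2": the triggered value of q_i keeps the sign of the current
   value of q_i and is comparable to it in size.  This is all the proof needs from the rules. *)
definition sector :: "real \<Rightarrow> real \<Rightarrow> bool" where
  "sector w D \<longleftrightarrow> (0 \<le> w \<and> w / 2 \<le> D \<and> D \<le> 3 / 2 * w) \<or> (w \<le> 0 \<and> 3 / 2 * w \<le> D \<and> D \<le> w / 2)"

lemma sector_uminus: "sector w D \<Longrightarrow> sector (- w) (- D)"
  by (auto simp: sector_def)

lemma sector_upper_bound:
  assumes "sector w D" "w \<le> A - B" "0 \<le> A" "0 \<le> B"
  shows "D \<le> 3 / 2 * A - 1 / 2 * B"
  using assms by (auto simp: sector_def)

lemma rule1_sector: "rule1 (1 / 2) q s t \<Longrightarrow> sector (q t) (q s)"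
  by (auto simp: rule1_def sector_def abs_if split: if_splits)

(* Rule 2 with c = 1/2 bounds |q| from above and below on the whole inter-event interval;
   by the intermediate value theorem q cannot change sign there, which gives the sector. *)
lemma rule2_sector:
  assumes st: "s \<le> t" and cq: "continuous_on {s..t} q" and r: "\<forall>u\<in>{s..t}. rule2 (1 / 2) q s u"
  shows "sector (q t) (q s)"
proof -
  have r': "2 / 3 * \<bar>q s\<bar> \<le> \<bar>q u\<bar> \<and> \<bar>q u\<bar> \<le> 2 * \<bar>q s\<bar>" if "u \<in> {s..t}" for u
    using r[rule_format, OF that] unfolding rule2_def by simp
  have no_zero: "q u \<noteq> 0" if "u \<in> {s..t}" "q s \<noteq> 0" for u
    using r'[OF that(1)] that(2) by auto
  have "0 < q t" if pos: "0 < q s"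
  proof (rule ccontr)
    assume "\<not> 0 < q t"
    then obtain u where "s \<le> u" "u \<le> t" "q u = 0"
      using IVT2'[of q t 0 s, OF _ _ st cq] pos by force
    then show False using no_zero pos by auto
  qed
  moreover have "q t < 0" if neg: "q s < 0"
  proof (rule ccontr)
    assume "\<not> q t < 0"
    then obtain u where "s \<le> u" "u \<le> t" "q u = 0"
      using IVT'[of q s 0 t, OF _ _ st cq] neg by force
    then show False using no_zero neg by auto
  qed
  moreover have "q t = 0" if "q s = 0" using r'[of t] st that by simp
  ultimately show ?thesis
  proof (cases "q s" "0::real" rule: linorder_cases)
    case less
    then have "\<bar>q s\<bar> = - q s" "\<bar>q t\<bar> = - q t" using \<open>q s < 0 \<Longrightarrow> q t < 0\<close> by auto
    then show ?thesis using r'[of t] st less \<open>q s < 0 \<Longrightarrow> q t < 0\<close> by (simp add: sector_def)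
  next
    case greater
    then have "\<bar>q s\<bar> = q s" "\<bar>q t\<bar> = q t" using \<open>0 < q s \<Longrightarrow> 0 < q t\<close> by auto
    then show ?thesis using r'[of t] st greater \<open>0 < q s \<Longrightarrow> 0 < q t\<close> by (simp add: sector_def)
  qed (simp add: sector_def)
qed

(* For a trigger set generated by the rule P, the last trigger s before t satisfies P s u
   on all of [s, t]: either the next trigger lies after t, or there is no further trigger. *)
lemma last_trigger_satisfies_rule:
  assumes adm: "admissible_triggers T" and gen: "generated_by T P" and t: "0 \<le> t"
  shows "last_trigger T t \<in> T \<and> last_trigger T t \<le> t \<and> (\<forall>u\<in>{last_trigger T t..t}. P (last_trigger T t) u)"
proof -
  let ?A = "{s \<in> T. s \<le> t}"
  have "?A = T \<inter> {..t}" by auto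
  then have fin: "finite ?A" using adm unfolding admissible_triggers_def by metis
  have ne: "?A \<noteq> {}" using adm t unfolding admissible_triggers_def by auto
  define s where "s = last_trigger T t"
  have sA: "s \<in> ?A" unfolding s_def last_trigger_def using Max_in[OF fin ne] .
  have later: "t < n" if "n \<in> T" "s < n" for n
  proof (rule ccontr)
    assume "\<not> t < n"
    then have "n \<le> s" using Max_ge[OF fin, of n] that(1) unfolding s_def last_trigger_def by simp
    then show False using that(2) by simp
  qed
  have "\<forall>u\<in>{s..t}. P s u"
  proof -
    let ?S = "{\<tau>. s \<le> \<tau> \<and> (\<forall>t\<in>{s..\<tau>}. P s t)}"
    have "(\<exists>n\<in>T. s < n \<and> T \<inter> {s<..<n} = {} \<and> n \<in> ?S \<and> (\<forall>\<tau>\<in>?S. \<tau> \<le> n))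
        \<or> ((\<forall>n\<in>T. n \<le> s) \<and> (\<forall>\<tau>\<ge>s. \<tau> \<in> ?S))"
      using gen sA unfolding generated_by_def Let_def by blast
    then show ?thesis
    proof
      assume "\<exists>n\<in>T. s < n \<and> T \<inter> {s<..<n} = {} \<and> n \<in> ?S \<and> (\<forall>\<tau>\<in>?S. \<tau> \<le> n)"
      then obtain n where "n \<in> T" "s < n" "\<forall>u\<in>{s..n}. P s u" by auto
      then show ?thesis using later by (meson atLeastAtMost_iff less_imp_le order.trans)
    next
      assume "(\<forall>n\<in>T. n \<le> s) \<and> (\<forall>\<tau>\<ge>s. \<tau> \<in> ?S)"
      then show ?thesis using sA by auto
    qed
  qed
  with sA show ?thesis unfolding s_def by auto
qed

lemma triggered_value_in_sector:
  assumes adm: "admissible_triggers T" and cq: "continuous_on {0..} q" and t: "0 \<le> t"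
    and gen: "generated_by T (rule1 (1 / 2) q) \<or> generated_by T (rule2 (1 / 2) q)"
  shows "sector (q t) (q (last_trigger T t))"
  using gen
proof
  assume "generated_by T (rule1 (1 / 2) q)"
  then have "rule1 (1 / 2) q (last_trigger T t) t" using last_trigger_satisfies_rule[OF adm _ t, of "rule1 (1 / 2) q"] by auto
  then show ?thesis by (rule rule1_sector)
next
  assume g: "generated_by T (rule2 (1 / 2) q)"
  define s where "s = last_trigger T t"
  have s: "s \<in> T" "s \<le> t" "\<forall>u\<in>{s..t}. rule2 (1 / 2) q s u"
    using last_trigger_satisfies_rule[OF adm g t] unfolding s_def by auto
  have "0 \<le> s" using s(1) adm unfolding admissible_triggers_def by auto
  then have "continuous_on {s..t} q" by (intro continuous_on_subset[OF cq]) auto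
  then show ?thesis using rule2_sector[OF s(2) _ s(3)] unfolding s_def by blast
qed

lemma qfun_disagreement:
  assumes "weighted_adjacency a"
  shows "qfun a x k t = (\<Sum>j\<in>UNIV. a k j * (x t j - x t k))"
proof -
  have "(\<Sum>j\<in>UNIV. (if k = j then (\<Sum>m\<in>UNIV. a k m) else 0) * x t j)
      = (\<Sum>j\<in>UNIV. if k = j then (\<Sum>m\<in>UNIV. a k m) * x t k else 0)"
    by (rule sum.cong) auto
  then have diag: "(\<Sum>j\<in>UNIV. (if k = j then (\<Sum>m\<in>UNIV. a k m) else 0) * x t j) = (\<Sum>m\<in>UNIV. a k m) * x t k"
    by simp
  have "qfun a x k t = (\<Sum>j\<in>UNIV. a k j * x t j) - (\<Sum>m\<in>UNIV. a k m) * x t k"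
    unfolding qfun_def laplacian_def left_diff_distrib sum_subtractf diag by simp
  also have "\<dots> = (\<Sum>j\<in>UNIV. a k j * (x t j - x t k))"
    by (simp add: right_diff_distrib sum_subtractf sum_distrib_right)
  finally show ?thesis .
qed

lemma qfun_uminus: "qfun a (\<lambda>t i. - x t i) i t = - qfun a x i t"
  unfolding qfun_def by (simp add: sum_negf)

lemma strongly_connected_bounded_path_length:
  fixes a :: "'n::finite \<Rightarrow> 'n \<Rightarrow> real"
  assumes "strongly_connected a"
  obtains N :: nat where "0 < N" "\<And>i k. \<exists>l\<le>N. (i, k) \<in> graph_edges a ^^ l"
proof -
  have "\<exists>l. (i, k) \<in> graph_edges a ^^ l" for i k
  proof (cases "i = k")
    case True then show ?thesis by (intro exI[of _ 0]) simp
  next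
    case False then show ?thesis using assms unfolding strongly_connected_def trancl_power by blast
  qed
  then obtain len where len: "\<And>i k. (i, k) \<in> graph_edges a ^^ len (i, k)"
    using choice[of "\<lambda>p l. (fst p, snd p) \<in> graph_edges a ^^ l"] by auto
  define N where "N = Suc (Max (range len))"
  have "len (i, k) \<le> Max (range len)" for i k by (rule Max_ge) auto
  then have "len (i, k) \<le> N" for i k unfolding N_def by (simp add: le_SucI)
  then show ?thesis using that[of N] len unfolding N_def by blast
qed

(* Constants of the contraction estimate: a bound on the speed of an agent relative to its
   distance from the maximum, and the smallest positive weight. *)
definition drift_rate :: "('n::finite \<Rightarrow> 'n \<Rightarrow> real) \<Rightarrow> real" where
  "drift_rate a = 3 / 2 * (\<Sum>k\<in>UNIV. \<Sum>j\<in>UNIV. a k j)"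

definition min_weight :: "('n::finite \<Rightarrow> 'n \<Rightarrow> real) \<Rightarrow> real" where
  "min_weight a = Min (insert 1 {a i j |i j. 0 < a i j})"

lemma min_weight:
  fixes a :: "'n::finite \<Rightarrow> 'n \<Rightarrow> real"
  shows "0 < min_weight a" "min_weight a \<le> 1" "0 < a i j \<Longrightarrow> min_weight a \<le> a i j"
proof -
  have fin: "finite (insert 1 {a i j |i j. 0 < a i j})"
    using finite_subset[of "{a i j |i j. 0 < a i j}" "range (case_prod a)"] by auto
  show "0 < min_weight a" unfolding min_weight_def using Min_in[OF fin] by fastforce
  show "min_weight a \<le> 1" unfolding min_weight_def using Min_le[OF fin] by simp
  show "0 < a i j \<Longrightarrow> min_weight a \<le> a i j" unfolding min_weight_def using Min_le[OF fin] by blast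
qed

(* The fraction of a deficit transmitted along one edge within a time window of length N, and
   the resulting contraction of the spread over such a window. *)
definition link_factor :: "('n::finite \<Rightarrow> 'n \<Rightarrow> real) \<Rightarrow> nat \<Rightarrow> real" where
  "link_factor a N = exp (- drift_rate a * N) * min_weight a / 2"

definition contraction_factor :: "('n::finite \<Rightarrow> 'n \<Rightarrow> real) \<Rightarrow> nat \<Rightarrow> real" where
  "contraction_factor a N = exp (- drift_rate a * N) * link_factor a N ^ N"

definition vmax :: "('n::finite \<Rightarrow> real) \<Rightarrow> real" where "vmax v = Max (range v)"
definition vmin :: "('n::finite \<Rightarrow> real) \<Rightarrow> real" where "vmin v = Min (range v)"

lemma vmax: "v i \<le> vmax v" "\<exists>i. v i = vmax v"
proof -
  show "v i \<le> vmax v" unfolding vmax_def by simp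
  have "Max (range v) \<in> range v" by (rule Max_in) auto
  then show "\<exists>i. v i = vmax v" unfolding vmax_def by (metis imageE)
qed

lemma vmin: "vmin v \<le> v i" "\<exists>i. v i = vmin v"
proof -
  show "vmin v \<le> v i" unfolding vmin_def by simp
  have "Min (range v) \<in> range v" by (rule Min_in) auto
  then show "\<exists>i. v i = vmin v" unfolding vmin_def by (metis imageE)
qed

locale sector_dynamics =
  fixes a :: "'n::finite \<Rightarrow> 'n \<Rightarrow> real" and x :: "real \<Rightarrow> 'n \<Rightarrow> real" and E :: "'n \<Rightarrow> real set"
  assumes weights: "weighted_adjacency a"
    and cont: "\<And>i. continuous_on {0..} (\<lambda>t. x t i)"
    and exceptions: "\<And>i b. finite (E i \<inter> {..b})"
    and deriv: "\<And>i t. 0 < t \<Longrightarrow> t \<notin> E i \<Longrightarrow>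
       \<exists>D. ((\<lambda>s. x s i) has_real_derivative D) (at t) \<and> sector (qfun a x i t) D"
begin

lemma a_nonneg: "0 \<le> a i j"
  using weights by (simp add: weighted_adjacency_def)

lemma drift_rate_nonneg: "0 \<le> drift_rate a"
  unfolding drift_rate_def by (simp add: a_nonneg sum_nonneg)

lemma degree_le_drift_rate: "3 / 2 * (\<Sum>j\<in>UNIV. a k j) \<le> drift_rate a"
proof -
  have "(\<Sum>j\<in>UNIV. a k j) \<le> (\<Sum>k\<in>UNIV. \<Sum>j\<in>UNIV. a k j)"
    by (rule member_le_sum[of k UNIV "\<lambda>k. \<Sum>j\<in>UNIV. a k j"]) (auto simp: a_nonneg sum_nonneg)
  then show ?thesis unfolding drift_rate_def by simp
qed

lemma continuous_on_interval: "0 \<le> s \<Longrightarrow> continuous_on {s..t} (\<lambda>u. x u i)"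
  by (rule continuous_on_subset[OF cont]) auto

lemma growth_below_bound:
  assumes below: "\<And>j. x u j \<le> M" and D: "sector (qfun a x k u) D"
  shows "D \<le> 3 / 2 * (\<Sum>j\<in>UNIV. a k j) * (M - x u k) - 1 / 2 * (a k i * (M - x u i))"
proof -
  have "qfun a x k u = (\<Sum>j\<in>UNIV. a k j * (M - x u k) - a k j * (M - x u j))"
    unfolding qfun_disagreement[OF weights] by (rule sum.cong) (auto simp: algebra_simps)
  also have "\<dots> = (\<Sum>j\<in>UNIV. a k j) * (M - x u k) - (\<Sum>j\<in>UNIV. a k j * (M - x u j))"
    by (simp add: sum_subtractf sum_distrib_right)
  also have "\<dots> \<le> (\<Sum>j\<in>UNIV. a k j) * (M - x u k) - a k i * (M - x u i)"
    using member_le_sum[of i UNIV "\<lambda>j. a k j * (M - x u j)"] below by (simp add: a_nonneg)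
  finally have "qfun a x k u \<le> (\<Sum>j\<in>UNIV. a k j) * (M - x u k) - a k i * (M - x u i)" .
  moreover have "0 \<le> (\<Sum>j\<in>UNIV. a k j) * (M - x u k)" "0 \<le> a k i * (M - x u i)"
    using below[of k] below[of i] by (simp_all add: a_nonneg sum_nonneg)
  ultimately have "D \<le> 3 / 2 * ((\<Sum>j\<in>UNIV. a k j) * (M - x u k)) - 1 / 2 * (a k i * (M - x u i))"
    by (rule sector_upper_bound[OF D])
  then show ?thesis by (simp add: mult.assoc)
qed

lemma slow_growth_near_max:
  assumes u: "0 < u" "u \<notin> E k" and close: "\<And>j. x u j \<le> x u k + \<eta>" and \<eta>: "0 \<le> \<eta>"
  shows "\<exists>D. ((\<lambda>s. x s k) has_real_derivative D) (at u) \<and> D \<le> drift_rate a * \<eta>"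
proof -
  obtain D where D: "((\<lambda>s. x s k) has_real_derivative D) (at u)" "sector (qfun a x k u) D"
    using deriv[OF u] by blast
  have "D \<le> 3 / 2 * (\<Sum>j\<in>UNIV. a k j) * \<eta> - 1 / 2 * (a k k * \<eta>)"
    using growth_below_bound[OF close D(2), of k] by simp
  also have "\<dots> \<le> drift_rate a * \<eta>"
    using mult_right_mono[OF degree_le_drift_rate[of k] \<eta>] mult_nonneg_nonneg[OF a_nonneg[of k k] \<eta>]
    by simp
  finally show ?thesis using D(1) by blast
qed

(* Maximum principle with a linearly growing margin: the first agent to touch the barrier
   M + \<epsilon>(1 + t - t0) would have to rise at rate \<epsilon>, but near the maximum it rises at
   most at rate \<epsilon>/2. *)
lemma max_principle_eps:
  assumes t: "0 \<le> t0" "t0 \<le> t" and M: "\<And>j. x t0 j \<le> M" and e: "0 < \<epsilon>"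
  shows "x t i < M + \<epsilon> * (1 + t - t0)"
proof (rule ccontr)
  assume crossed: "\<not> ?thesis"
  define w where "w j u = x u j - M - \<epsilon> * (1 + u - t0)" for j u
  have cw: "continuous_on {t0..t} (w j)" for j
    unfolding w_def by (intro continuous_intros continuous_on_interval t(1))
  obtain \<tau> k where \<tau>: "t0 < \<tau>" "\<tau> \<le> t" "0 \<le> w k \<tau>"
    and before: "\<And>j u. t0 \<le> u \<Longrightarrow> u < \<tau> \<Longrightarrow> w j u < 0"
  proof (rule first_crossing_time[of t0 t w i])
    show "w j t0 < 0" for j using M[of j] e by (simp add: w_def)
  qed (use t crossed cw in \<open>auto simp: w_def\<close>)
  define \<eta> where "\<eta> = \<epsilon> / (2 * drift_rate a + 2)"
  have \<eta>: "0 < \<eta>" "drift_rate a * \<eta> \<le> \<epsilon> / 2"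
    unfolding \<eta>_def using e drift_rate_nonneg by (auto simp: field_simps)
  obtain \<delta> where \<delta>: "0 < \<delta>" "\<And>u. 0 \<le> u \<Longrightarrow> dist u \<tau> < \<delta> \<Longrightarrow> dist (x u k) (x \<tau> k) < \<eta>"
    using cont[of k, unfolded continuous_on_iff] \<tau>(1) t(1) \<eta>(1) by (metis atLeast_iff less_imp_le order.trans)
  define s where "s = max t0 (\<tau> - \<delta> / 2)"
  have s: "t0 \<le> s" "s < \<tau>" "\<tau> - \<delta> < s" unfolding s_def using \<tau>(1) \<delta>(1) by auto
  \<comment> \<open>Just before \<tau>, agent k is within \<eta> of the maximum, so it rises slower than the barrier.\<close>
  have "- w k s \<le> - w k \<tau>"
  proof (rule nondecreasing_if_nonneg_derivative[where S = "E k \<inter> {..\<tau>}" and f = "\<lambda>u. - w k u"])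
    show "continuous_on {s..\<tau>} (\<lambda>u. - w k u)"
      by (intro continuous_intros continuous_on_subset[OF cw]) (use s \<tau> in auto)
  next
    fix u assume u: "u \<in> {s<..<\<tau>} - E k \<inter> {..\<tau>}"
    then have u0: "0 < u" "u \<notin> E k" using s t by auto
    have "x \<tau> k - \<eta> < x u k" using \<delta>(2)[of u] u s u0 by (auto simp: dist_real_def)
    moreover have "x u j < x \<tau> k" for j
    proof -
      have "\<epsilon> * (1 + u - t0) \<le> \<epsilon> * (1 + \<tau> - t0)" using e u by (intro mult_left_mono) auto
      then show ?thesis using before[of u j] \<tau>(3) u s unfolding w_def by auto
    qed
    ultimately have "x u j \<le> x u k + \<eta>" for j by (metis add.commute diff_less_eq less_le_not_le order.trans)
    then obtain D where D: "((\<lambda>s. x s k) has_real_derivative D) (at u)" "D \<le> drift_rate a * \<eta>"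
      using slow_growth_near_max[OF u0] \<eta>(1) by fastforce
    have "((\<lambda>u. - w k u) has_real_derivative \<epsilon> - D) (at u)"
      unfolding w_def using D(1) by (auto intro!: derivative_eq_intros)
    then show "\<exists>y. ((\<lambda>u. - w k u) has_real_derivative y) (at u) \<and> 0 \<le> y"
      using D(2) \<eta>(2) e by (intro exI[of _ "\<epsilon> - D"]) auto
  qed (use s exceptions in auto)
  then show False using before[of s k] s \<tau>(3) by simp
qed

lemma max_principle:
  assumes t: "0 \<le> t0" "t0 \<le> t" and M: "\<And>j. x t0 j \<le> M"
  shows "x t i \<le> M"
proof (rule ccontr)
  assume above: "\<not> x t i \<le> M"
  define \<epsilon> where "\<epsilon> = (x t i - M) / (2 * (1 + t - t0))"
  have "0 < \<epsilon>" unfolding \<epsilon>_def using above t by simp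
  moreover have "\<epsilon> * (1 + t - t0) = (x t i - M) / 2" unfolding \<epsilon>_def using t by (simp add: field_simps)
  ultimately show False using max_principle_eps[OF t M, of \<epsilon> i] above by simp
qed

lemma mirrored: "sector_dynamics a (\<lambda>t i. - x t i) E"
proof
  fix i t assume "0 < t" "t \<notin> E i"
  then obtain D where D: "((\<lambda>s. x s i) has_real_derivative D) (at t)" "sector (qfun a x i t) D"
    using deriv by blast
  show "\<exists>D. ((\<lambda>s. - x s i) has_real_derivative D) (at t) \<and> sector (qfun a (\<lambda>t i. - x t i) i t) D"
    using D by (intro exI[of _ "- D"]) (auto intro!: derivative_eq_intros sector_uminus simp: qfun_uminus)
qed (use weights exceptions cont in \<open>auto intro: continuous_intros\<close>)

lemma min_principle:
  assumes "0 \<le> t0" "t0 \<le> t" "\<And>j. m \<le> x t0 j"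
  shows "m \<le> x t i"
  using sector_dynamics.max_principle[OF mirrored assms(1,2), of "- m" i] assms(3) by simp

lemma deficit_growth:
  assumes t: "0 \<le> t0" "t0 \<le> t1" "t1 \<le> t" and M: "\<And>j. x t0 j \<le> M"
    and g: "0 \<le> g" "\<And>u. t1 < u \<Longrightarrow> u < t \<Longrightarrow> g \<le> a k i * (M - x u i)"
  shows "exp (- drift_rate a * (t - t1)) * ((M - x t1 k) + g / 2 * (t - t1)) \<le> M - x t k"
proof (rule gronwall_affine_lower[where S = "E k \<inter> {..t}" and y = "\<lambda>s. M - x s k"])
  show "continuous_on {t1..t} (\<lambda>s. M - x s k)"
    using t by (intro continuous_intros continuous_on_interval) auto
next
  fix u assume u: "u \<in> {t1<..<t} - E k \<inter> {..t}"
  then have u0: "0 < u" "u \<notin> E k" using t by auto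
  obtain D where D: "((\<lambda>s. x s k) has_real_derivative D) (at u)" "sector (qfun a x k u) D"
    using deriv[OF u0] by blast
  have below: "x u j \<le> M" for j using max_principle[OF t(1) _ M] u t by simp
  have "D \<le> 3 / 2 * (\<Sum>j\<in>UNIV. a k j) * (M - x u k) - 1 / 2 * (a k i * (M - x u i))"
    by (rule growth_below_bound[OF below D(2)])
  also have "\<dots> \<le> drift_rate a * (M - x u k) - g / 2"
  proof -
    have "3 / 2 * (\<Sum>j\<in>UNIV. a k j) * (M - x u k) \<le> drift_rate a * (M - x u k)"
      using below[of k] by (intro mult_right_mono degree_le_drift_rate) auto
    moreover have "g \<le> a k i * (M - x u i)" using g(2) u by simp
    ultimately show ?thesis by linarith
  qed
  finally have "g / 2 - drift_rate a * (M - x u k) \<le> - D" by simp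
  moreover have "((\<lambda>s. M - x s k) has_real_derivative - D) (at u)"
    using D(1) by (auto intro!: derivative_eq_intros)
  ultimately show "\<exists>D. ((\<lambda>s. M - x s k) has_real_derivative D) (at u) \<and> g / 2 - drift_rate a * (M - x u k) \<le> D"
    by blast
qed (use t g exceptions drift_rate_nonneg in auto)

lemma deficit_across_edge:
  fixes N :: nat and t0 t1 t :: real
  assumes t: "0 \<le> t0" "t0 \<le> t1" "t1 + 1 \<le> t" "t - t1 \<le> N" and M: "\<And>j. x t0 j \<le> M"
    and edge: "0 < a k i" and c: "0 \<le> c" "\<And>u. t1 < u \<Longrightarrow> u < t \<Longrightarrow> c \<le> M - x u i"
  shows "exp (- drift_rate a * N) * (min_weight a * c / 2) \<le> M - x t k"
proof -
  have w: "0 < min_weight a" using min_weight(1) .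
  have push: "min_weight a * c \<le> a k i * (M - x u i)" if "t1 < u" "u < t" for u
    using min_weight(3)[of a k i, OF edge] c(2)[OF that] c w by (intro mult_mono) auto
  have "exp (- drift_rate a * (t - t1)) * ((M - x t1 k) + min_weight a * c / 2 * (t - t1)) \<le> M - x t k"
    using deficit_growth[OF t(1,2) _ M _ push] t c w by simp
  moreover have "min_weight a * c / 2 \<le> (M - x t1 k) + min_weight a * c / 2 * (t - t1)"
  proof -
    have "min_weight a * c / 2 * 1 \<le> min_weight a * c / 2 * (t - t1)"
      using t c w by (intro mult_left_mono) auto
    then show ?thesis using max_principle[OF t(1,2) M, of k] by linarith
  qed
  moreover have "exp (- drift_rate a * N) \<le> exp (- drift_rate a * (t - t1))"
    using t drift_rate_nonneg by (simp add: mult_left_mono)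
  ultimately show ?thesis
    using c w mult_mono[of "exp (- drift_rate a * N)" "exp (- drift_rate a * (t - t1))"
        "min_weight a * c / 2" "(M - x t1 k) + min_weight a * c / 2 * (t - t1)"]
    by simp
qed

lemma link_factor_bounds: "0 < link_factor a N" "link_factor a N \<le> 1"
proof -
  have "exp (- drift_rate a * N) \<le> 1" using drift_rate_nonneg by simp
  then have "exp (- drift_rate a * N) * min_weight a \<le> 1"
    using mult_le_one[of _ "min_weight a"] min_weight(1,2)[of a] by simp
  then show "0 < link_factor a N" "link_factor a N \<le> 1"
    unfolding link_factor_def using min_weight(1)[of a] by auto
qed

lemma deficit_propagation:
  fixes l N :: nat
  assumes t0: "0 \<le> t0" and M: "\<And>j. x t0 j \<le> M" and r: "x t0 r = m"
  shows "(r, k) \<in> graph_edges a ^^ l \<Longrightarrow> t0 + l \<le> t \<Longrightarrow> t \<le> t0 + N \<Longrightarrow>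
    exp (- drift_rate a * N) * link_factor a N ^ l * (M - m) \<le> M - x t k"
proof (induction l arbitrary: k t)
  case 0
  then have k: "k = r" and tt: "t0 \<le> t" "t \<le> t0 + N" by auto
  have "exp (- drift_rate a * (t - t0)) * (M - m) \<le> M - x t k"
    using deficit_growth[OF t0 order.refl tt(1) M, of 0 k k] weights k r by (simp add: weighted_adjacency_def)
  moreover have "exp (- drift_rate a * N) \<le> exp (- drift_rate a * (t - t0))"
    using tt drift_rate_nonneg by (simp add: mult_left_mono)
  moreover have "0 \<le> M - m" using M[of r] r by simp
  ultimately have "exp (- drift_rate a * N) * (M - m) \<le> M - x t k"
    by (meson mult_right_mono order.trans)
  then show ?case by simp
next
  case (Suc l)
  from Suc.prems(1) obtain i where ri: "(r, i) \<in> graph_edges a ^^ l" and ik: "(i, k) \<in> graph_edges a"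
    by (auto elim: relpow_Suc_E)
  define c where "c = exp (- drift_rate a * N) * link_factor a N ^ l * (M - m)"
  have "exp (- drift_rate a * N) * (min_weight a * c / 2) \<le> M - x t k"
  proof (rule deficit_across_edge[OF t0 _ _ _ M])
    show "0 < a k i" using ik by (simp add: graph_edges_def)
    show "0 \<le> c" unfolding c_def using M[of r] r link_factor_bounds(1)[of N] by simp
    show "c \<le> M - x u i" if "t0 + real l < u" "u < t" for u
      unfolding c_def using Suc.IH[OF ri, of u] Suc.prems that by simp
  qed (use Suc.prems in auto)
  then show ?case unfolding c_def link_factor_def by (simp add: algebra_simps)
qed

lemma contraction_factor_bounds: "0 < contraction_factor a N" "contraction_factor a N \<le> 1"
proof -
  have "exp (- drift_rate a * N) \<le> 1" using drift_rate_nonneg by simp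
  moreover have "link_factor a N ^ N \<le> 1"
    using power_le_one[OF less_imp_le[OF link_factor_bounds(1)] link_factor_bounds(2)] .
  ultimately show "contraction_factor a N \<le> 1"
    unfolding contraction_factor_def using link_factor_bounds(1)[of N] by (intro mult_le_one) auto
  show "0 < contraction_factor a N" unfolding contraction_factor_def using link_factor_bounds(1)[of N] by simp
qed

definition spread :: "real \<Rightarrow> real" where
  "spread t = vmax (x t) - vmin (x t)"

lemma spread_bounds: "\<bar>x t i - x t j\<bar> \<le> spread t"
  unfolding spread_def using vmax(1)[of "x t" i] vmin(1)[of "x t" i] vmax(1)[of "x t" j] vmin(1)[of "x t" j]
  by linarith

lemma spread_nonneg: "0 \<le> spread t"
  using spread_bounds[of t i i] by simp

(* By the maximum and minimum principles the spread never increases. *)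
lemma spread_antitone:
  assumes "0 \<le> s" "s \<le> t"
  shows "spread t \<le> spread s"
proof -
  obtain i j where "x t i = vmax (x t)" "x t j = vmin (x t)" using vmax(2) vmin(2) by metis
  moreover have "x t i \<le> vmax (x s)" using max_principle[OF assms] vmax(1) by blast
  moreover have "vmin (x s) \<le> x t j" using min_principle[OF assms] vmin(1) by blast
  ultimately show ?thesis unfolding spread_def by simp
qed

(* Over a time window of length N the spread shrinks by the factor 1 - contraction_factor:
   every agent acquires a deficit relative to the old maximum, while the minimum does not drop. *)
lemma spread_contraction:
  fixes N :: nat and s :: real
  assumes paths: "\<And>i k. \<exists>l\<le>N. (i, k) \<in> graph_edges a ^^ l" and s: "0 \<le> s"
  shows "spread (s + N) \<le> (1 - contraction_factor a N) * spread s"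
proof -
  define M m where "M = vmax (x s)" and "m = vmin (x s)"
  define \<rho> where "\<rho> = link_factor a N"
  have \<rho>: "0 < \<rho>" "\<rho> \<le> 1" unfolding \<rho>_def using link_factor_bounds by auto
  obtain r where r: "x s r = m" using vmin(2) unfolding m_def by metis
  have mM: "m \<le> M" unfolding M_def m_def using vmin(1) vmax(1) order.trans by metis
  have top: "x (s + N) k \<le> M - contraction_factor a N * (M - m)" for k
  proof -
    obtain l where l: "l \<le> N" "(r, k) \<in> graph_edges a ^^ l" using paths by blast
    have "exp (- drift_rate a * N) * \<rho> ^ l * (M - m) \<le> M - x (s + N) k"
      unfolding \<rho>_def using deficit_propagation[OF s _ r l(2)] l(1) unfolding M_def by (simp add: vmax(1))
    moreover have "contraction_factor a N * (M - m) \<le> exp (- drift_rate a * N) * \<rho> ^ l * (M - m)"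
      unfolding contraction_factor_def \<rho>_def[symmetric]
      using mM l(1) \<rho> by (intro mult_right_mono mult_left_mono power_decreasing) auto
    ultimately show ?thesis by linarith
  qed
  obtain i where "x (s + N) i = vmax (x (s + N))" using vmax(2) by metis
  moreover have "m \<le> vmin (x (s + N))"
  proof -
    obtain j where "x (s + N) j = vmin (x (s + N))" using vmin(2) by metis
    moreover have "vmin (x s) \<le> x (s + N) j" by (rule min_principle[OF s]) (auto simp: vmin(1))
    ultimately show ?thesis unfolding m_def by simp
  qed
  moreover have "(1 - contraction_factor a N) * (M - m) = M - contraction_factor a N * (M - m) - m"
    by (simp add: algebra_simps)
  ultimately show ?thesis unfolding spread_def M_def[symmetric] m_def[symmetric] using top[of i] by linarith
qed

(* Geometric decay of the spread along the grid n N, monotonicity in between, and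
   |x_i - x_j| \<le> spread give consensus. *)
lemma consensus_if_bounded_paths:
  fixes N :: nat
  assumes N: "0 < N" and paths: "\<And>i k. \<exists>l\<le>N. (i, k) \<in> graph_edges a ^^ l"
  shows "consensus x"
proof -
  define \<gamma> where "\<gamma> = contraction_factor a N"
  have \<gamma>: "0 < \<gamma>" "\<gamma> \<le> 1" unfolding \<gamma>_def using contraction_factor_bounds by auto
  have grid: "spread (real n * N) \<le> (1 - \<gamma>) ^ n * spread 0" for n
  proof (induction n)
    case (Suc n)
    have "spread (real (Suc n) * N) \<le> (1 - \<gamma>) * spread (real n * N)"
      using spread_contraction[OF paths, where s = "real n * N"] unfolding \<gamma>_def by (simp add: algebra_simps)
    also have "\<dots> \<le> (1 - \<gamma>) * ((1 - \<gamma>) ^ n * spread 0)" using Suc.IH \<gamma> by (intro mult_left_mono) auto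
    finally show ?case by simp
  qed simp
  have decay: "(\<lambda>n. (1 - \<gamma>) ^ n * spread 0) \<longlonglongrightarrow> 0"
    using \<gamma> by (intro tendsto_mult_left_zero LIMSEQ_power_zero) auto
  have "(\<lambda>n. spread (real n * N)) \<longlonglongrightarrow> 0"
    by (rule tendsto_sandwich[OF _ _ tendsto_const decay]) (auto intro!: always_eventually grid spread_nonneg)
  then have "(spread \<longlongrightarrow> 0) at_top"
    using antitone_tendsto_zero_along_grid[of spread "real N"] spread_antitone spread_nonneg N by force
  then have "((\<lambda>t. x t i - x t j) \<longlongrightarrow> 0) at_top" for i j
    by (rule Lim_null_comparison[OF always_eventually, rotated]) (simp add: spread_bounds)
  then show ?thesis unfolding consensus_def by blast
qed

end

lemma triggered_solution_sector_dynamics: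
  assumes weights: "weighted_adjacency a" and adm: "\<And>i. admissible_triggers (T i)" and sol: "solves_S a T x"
    and gen: "\<And>i. generated_by (T i) (rule1 (1 / 2) (qfun a x i)) \<or> generated_by (T i) (rule2 (1 / 2) (qfun a x i))"
  shows "sector_dynamics a x T"
proof
  show cont: "continuous_on {0..} (\<lambda>t. x t i)" for i using sol unfolding solves_S_def by blast
  show "finite (T i \<inter> {..b})" for i b using adm[of i] unfolding admissible_triggers_def by blast
  fix i t assume t: "0 < t" "t \<notin> T i"
  have "((\<lambda>s. x s i) has_real_derivative qfun a x i (last_trigger (T i) t)) (at t)"
    using sol t unfolding solves_S_def qfun_def by blast
  moreover have "continuous_on {0..} (qfun a x i)"
    unfolding qfun_def by (intro continuous_intros cont)
  then have "sector (qfun a x i t) (qfun a x i (last_trigger (T i) t))"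
    using triggered_value_in_sector[OF adm _ _ gen] t by simp
  ultimately show "\<exists>D. ((\<lambda>s. x s i) has_real_derivative D) (at t) \<and> sector (qfun a x i t) D" by blast
qed (fact weights)

theorem corollary2:
  fixes a :: "'n::finite \<Rightarrow> 'n \<Rightarrow> real"
  assumes "weighted_adjacency a" and "strongly_connected a"
  shows "\<exists>c. 0 < c \<and> c < 1 \<and>
    (\<forall>(x :: real \<Rightarrow> 'n \<Rightarrow> real) (T :: 'n \<Rightarrow> real set).
       (\<forall>i. admissible_triggers (T i)) \<and> solves_S a T x \<and>
       (\<forall>i. generated_by (T i) (rule1 c (qfun a x i))
          \<or> generated_by (T i) (rule2 c (qfun a x i)))
       \<longrightarrow> consensus x)"
proof (intro exI[of _ "1 / 2 :: real"] conjI allI impI)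
  obtain N :: nat where N: "0 < N" "\<And>i k. \<exists>l\<le>N. (i, k) \<in> graph_edges a ^^ l"
    using strongly_connected_bounded_path_length[OF assms(2)] by blast
  fix x :: "real \<Rightarrow> 'n \<Rightarrow> real" and T :: "'n \<Rightarrow> real set"
  assume "(\<forall>i. admissible_triggers (T i)) \<and> solves_S a T x \<and>
    (\<forall>i. generated_by (T i) (rule1 (1 / 2) (qfun a x i)) \<or> generated_by (T i) (rule2 (1 / 2) (qfun a x i)))"
  then have "sector_dynamics a x T"
    using triggered_solution_sector_dynamics[OF assms(1)] by blast
  then show "consensus x" using sector_dynamics.consensus_if_bounded_paths N by blast
qed simp_all

end
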